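(* Let $f\in A[X]$ be monic with discriminant $\Delta=\mathrm{Res}_X(f,f')\neq 0$, $r=v(\Delta)$, and let $N>2r$ be an integer. Then the number of roots in $A/\pi^NA$ of the reduction $f_N$ of $f$ modulo $\pi^N$ is at most $q^{r+\lfloor r/2\rfloor+1}$.
   Context: $K$ is a field complete with respect to a non-archimedean discrete valuation $v$, normalized by $v(\pi)=1$ for a uniformizer $\pi$ of the valuation ring $A=\{x\in K: v(x)\geq 0\}$; the residue field $A/\pi A$ is finite with $q$ elements. *)

theory Defs
  imports "HOL-Computational_Algebra.Polynomial" "Subresultants.Resultant_Prelim"
begin

text \<open>A discrete valuation on a field, with values in the integers; the value of 0
  (formally infinity) is never used: all axioms are stated for nonzero elements.\<close>
definition discrete_valuation :: "('a::field \<Rightarrow> int) \<Rightarrow> bool" where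
  "discrete_valuation v \<longleftrightarrow>
     (\<forall>x y. x \<noteq> 0 \<longrightarrow> y \<noteq> 0 \<longrightarrow> v (x * y) = v x + v y) \<and>
     (\<forall>x y. x \<noteq> 0 \<longrightarrow> y \<noteq> 0 \<longrightarrow> x + y \<noteq> 0 \<longrightarrow> v (x + y) \<ge> min (v x) (v y))"

text \<open>x is v-adically small of order n: v(x) >= n (with v(0) = infinity).\<close>
definition vge :: "('a::field \<Rightarrow> int) \<Rightarrow> 'a \<Rightarrow> int \<Rightarrow> bool" where
  "vge v x n \<longleftrightarrow> x = 0 \<or> v x \<ge> n"

definition v_complete :: "('a::field \<Rightarrow> int) \<Rightarrow> bool" where
  "v_complete v \<longleftrightarrow>
     (\<forall>s :: nat \<Rightarrow> 'a.
        (\<forall>n. \<exists>M. \<forall>i\<ge>M. \<forall>j\<ge>M. vge v (s i - s j) n) \<longrightarrow>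
        (\<exists>L. \<forall>n. \<exists>M. \<forall>i\<ge>M. vge v (s i - L) n))"

definition val_ring :: "('a::field \<Rightarrow> int) \<Rightarrow> 'a set" where
  "val_ring v = {x. vge v x 0}"

definition cong_rel :: "('a::field \<Rightarrow> int) \<Rightarrow> 'a \<Rightarrow> nat \<Rightarrow> ('a \<times> 'a) set" where
  "cong_rel v \<pi> N = {(x, y). x \<in> val_ring v \<and> y \<in> val_ring v \<and>
                       (\<exists>a \<in> val_ring v. x - y = \<pi> ^ N * a)}"

definition quot_ring :: "('a::field \<Rightarrow> int) \<Rightarrow> 'a \<Rightarrow> nat \<Rightarrow> 'a set set" where
  "quot_ring v \<pi> N = val_ring v // cong_rel v \<pi> N"

definition roots_mod :: "('a::field \<Rightarrow> int) \<Rightarrow> 'a \<Rightarrow> nat \<Rightarrow> 'a poly \<Rightarrow> 'a set set" where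
  "roots_mod v \<pi> N f = {C \<in> quot_ring v \<pi> N.
      \<exists>a \<in> C. \<exists>b \<in> val_ring v. poly f a = \<pi> ^ N * b}"

end

theory Submission
  imports Defs
begin

text \<open>Call \<open>a \<in> A\<close> an approximate root if \<open>v(f(a)) \<ge> N\<close>. Subtracting from \<open>f\<close> the constant
  \<open>f(a)\<close>, or the secant line through two approximate roots \<open>a \<noteq> c\<close>, gives a polynomial \<open>F\<close> with
  exact roots which is congruent to \<open>f\<close> modulo \<open>\<pi>\<^bsup>r+1\<^esup>\<close>, so its discriminant still has valuation
  \<open>r\<close> and \<open>v(F'(x)) = v(f'(x))\<close> at approximate roots. Cramer's rule applied to the Sylvester matrix
  shows that this discriminant is divisible by \<open>F'(a)\<close>, resp. by \<open>F'(a) F'(c)\<close>. Hence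
  \<open>v(f'(a)) \<le> r\<close>, and \<open>v(f'(a)) + v(f'(c)) \<le> r\<close> whenever \<open>v(a - c) \<le> v(f'(a))\<close>. The Taylor
  expansion at \<open>c\<close> forces \<open>v(a - c) \<le> v(f'(c))\<close> or \<open>v(a - c) \<ge> N - v(f'(c))\<close>. Together: two
  approximate roots that agree modulo \<open>\<pi>\<^bsup>\<lfloor>r/2\<rfloor>+1\<^esup>\<close> agree modulo \<open>\<pi>\<^bsup>N-r\<^esup>\<close>. So a root of \<open>f\<^sub>N\<close>
  is determined by its first \<open>\<lfloor>r/2\<rfloor>+1\<close> digits together with its \<open>r\<close> digits at the positions
  \<open>N-r, \<dots>, N-1\<close>.\<close>

section \<open>Polynomials and resultants\<close>

lemma degree_diff_const: "degree (p - [:c:]) = degree (p :: 'a::comm_ring poly)"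
proof (cases "degree p = 0")
  case True
  then show ?thesis using degree_diff_le_max[of p "[:c:]"] by simp
next
  case False
  then have "degree (- [:c:]) < degree p" by simp
  then show ?thesis by (metis degree_add_eq_left diff_conv_add_uminus)
qed

lemma degree_diff_linear:
  assumes "degree p \<ge> 2" shows "degree (p - [:c, s:]) = degree (p :: 'a::comm_ring poly)"
proof -
  have "degree (- [:c, s:]) < degree p" using assms degree_pCons_le[of c "[:s:]"] by simp
  then show ?thesis by (metis degree_add_eq_left diff_conv_add_uminus)
qed

lemma sylvester_row_times_powers:
  fixes F G :: "'a::comm_ring_1 poly"
  assumes i: "i < degree F + degree G"
  shows "(\<Sum>j\<in>{0..<degree F + degree G}. sylvester_mat F G $$ (i,j) * z ^ (degree F + degree G - 1 - j))
    = (if i < degree G then z ^ (degree G - 1 - i) * poly F z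
       else z ^ (degree F + degree G - 1 - i) * poly G z)"
proof -
  define m where "m = degree F"
  define n where "n = degree G"
  have i': "i < m + n" using i m_def n_def by simp
  have idx: "\<And>j. j < m + n \<Longrightarrow> sylvester_mat F G $$ (i,j) =
    (if i < n then if i \<le> j \<and> j - i \<le> m then coeff F (m + i - j) else 0
     else if i - n \<le> j \<and> j \<le> i then coeff G (i - j) else 0)"
    using i unfolding m_def n_def by (simp add: sylvester_index_mat)
  show ?thesis
  proof (cases "i < n")
    case True
    have "(\<Sum>j\<in>{0..<m+n}. sylvester_mat F G $$ (i,j) * z ^ (m+n-1-j))
        = (\<Sum>j\<in>{i..i+m}. coeff F (m+i-j) * z ^ (m+n-1-j))"
      by (rule sum.mono_neutral_cong_right) (use True in \<open>auto simp: idx\<close>)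
    also have "\<dots> = (\<Sum>k\<in>{0..m}. coeff F k * z ^ (n - 1 - i + k))"
      by (rule sum.reindex_bij_witness[of _ "\<lambda>k. m+i-k" "\<lambda>j. m+i-j"])
         (use True in \<open>auto simp: add.commute\<close>)
    also have "\<dots> = z ^ (n - 1 - i) * (\<Sum>k\<le>m. coeff F k * z ^ k)"
      by (simp add: sum_distrib_left power_add atLeast0AtMost algebra_simps)
    also have "\<dots> = z ^ (n - 1 - i) * poly F z" by (simp add: poly_altdef m_def)
    finally show ?thesis using True m_def n_def by simp
  next
    case False
    have "(\<Sum>j\<in>{0..<m+n}. sylvester_mat F G $$ (i,j) * z ^ (m+n-1-j))
        = (\<Sum>j\<in>{i-n..i}. coeff G (i-j) * z ^ (m+n-1-j))"
      by (rule sum.mono_neutral_cong_right) (use False i' in \<open>auto simp: idx\<close>)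
    also have "\<dots> = (\<Sum>k\<in>{0..n}. coeff G k * z ^ (m + n - 1 - i + k))"
      by (rule sum.reindex_bij_witness[of _ "\<lambda>k. i-k" "\<lambda>j. i-j"])
         (use False i' in \<open>auto simp: add.commute\<close>)
    also have "\<dots> = z ^ (m + n - 1 - i) * (\<Sum>k\<le>n. coeff G k * z ^ k)"
      by (simp add: sum_distrib_left power_add atLeast0AtMost algebra_simps)
    also have "\<dots> = z ^ (m + n - 1 - i) * poly G z" by (simp add: poly_altdef n_def)
    finally show ?thesis using False m_def n_def by simp
  qed
qed

text \<open>For a root \<open>z\<close> of \<open>F\<close>, the Sylvester matrix sends \<open>(z\<^bsup>N-1\<^esup>, \<dots>, z, 1)\<close> to \<open>G(z)\<close> times
  this column.\<close>
definition root_power_col :: "nat \<Rightarrow> nat \<Rightarrow> 'a::comm_ring_1 \<Rightarrow> nat \<Rightarrow> 'a" where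
  "root_power_col n N z i = (if i < n then 0 else z ^ (N - 1 - i))"

lemma sylvester_row_times_root_powers:
  fixes F G :: "'a::comm_ring_1 poly"
  assumes "poly F z = 0" and "i < degree F + degree G"
  shows "(\<Sum>j\<in>{0..<degree F + degree G}. sylvester_mat F G $$ (i,j) * z ^ (degree F + degree G - 1 - j))
    = poly G z * root_power_col (degree G) (degree F + degree G) z i"
  using sylvester_row_times_powers[OF assms(2), of z] assms(1)
  by (simp add: root_power_col_def mult.commute)

lemma sylvester_mult_root_powers:
  fixes F G :: "'a::comm_ring_1 poly"
  assumes "poly F z = 0"
  defines "N \<equiv> degree F + degree G"
  shows "sylvester_mat F G *\<^sub>v vec N (\<lambda>j. z ^ (N - 1 - j))
    = vec N (\<lambda>i. poly G z * root_power_col (degree G) N z i)"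
proof (rule eq_vecI)
  fix i assume "i < dim_vec (vec N (\<lambda>i. poly G z * root_power_col (degree G) N z i))"
  then have i: "i < N" by simp
  have "(sylvester_mat F G *\<^sub>v vec N (\<lambda>j. z ^ (N - 1 - j))) $ i
      = (\<Sum>j\<in>{0..<N}. sylvester_mat F G $$ (i,j) * z ^ (N - 1 - j))"
    using i sylvester_carrier_mat[of F G] by (simp add: scalar_prod_def N_def)
  also have "\<dots> = poly G z * root_power_col (degree G) N z i"
    using sylvester_row_times_root_powers[OF assms(1)] i by (simp add: N_def)
  finally show "(sylvester_mat F G *\<^sub>v vec N (\<lambda>j. z ^ (N - 1 - j))) $ i
      = vec N (\<lambda>i. poly G z * root_power_col (degree G) N z i) $ i" using i by simp
qed (simp add: N_def)

lemma det_replace_col_smult: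
  fixes M :: "'a::comm_ring_1 mat"
  assumes M: "M \<in> carrier_mat n n" and k: "k < n"
  shows "det (replace_col M (vec n (\<lambda>i. c * u i)) k) = c * det (replace_col M (vec n u) k)"
proof -
  define M' where "M' = replace_col M (vec n u) k"
  have M': "M' \<in> carrier_mat n n" using M by (auto simp: M'_def replace_col_def)
  define x where "x = vec n (\<lambda>j. if j = k then c else (0::'a))"
  have x: "x \<in> carrier_vec n" by (simp add: x_def)
  have "M' *\<^sub>v x = vec n (\<lambda>i. c * u i)"
  proof (rule eq_vecI)
    fix i assume "i < dim_vec (vec n (\<lambda>i. c * u i))"
    then have i: "i < n" by simp
    have "(M' *\<^sub>v x) $ i = (\<Sum>j\<in>{0..<n}. M' $$ (i,j) * x $ j)"
      using M' i x by (simp add: scalar_prod_def)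
    also have "\<dots> = (\<Sum>j\<in>{0..<n}. if j = k then u i * c else 0)"
      by (rule sum.cong) (use i M in \<open>auto simp: x_def M'_def replace_col_def\<close>)
    also have "\<dots> = c * u i" using k by simp
    finally show "(M' *\<^sub>v x) $ i = vec n (\<lambda>i. c * u i) $ i" using i by simp
  qed (use M' in simp)
  then have "det (replace_col M' (vec n (\<lambda>i. c * u i)) k) = x $ k * det M'"
    using cramer_lemma_mat[OF M' x k] by simp
  moreover have "replace_col M' (vec n (\<lambda>i. c * u i)) k = replace_col M (vec n (\<lambda>i. c * u i)) k"
    by (rule eq_matI) (auto simp: M'_def replace_col_def)
  ultimately show ?thesis using k by (simp add: x_def M'_def)
qed

text \<open>Cramer's rule for the vector of powers of a root \<open>a\<close> of \<open>F\<close> (whose last entry is 1)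
  pulls the factor \<open>G(a)\<close> out of the last column.\<close>
lemma resultant_root_factor:
  fixes F G :: "'a::comm_ring_1 poly"
  assumes Fa: "poly F a = 0" and deg: "degree F + degree G \<ge> 1"
  defines "N \<equiv> degree F + degree G"
  shows "resultant F G = poly G a *
    det (replace_col (sylvester_mat F G) (vec N (root_power_col (degree G) N a)) (N - 1))"
proof -
  define S where "S = sylvester_mat F G"
  have S: "S \<in> carrier_mat N N" unfolding S_def N_def by (rule sylvester_carrier_mat)
  have L: "N - 1 < N" using deg by (simp add: N_def)
  have "det S = det (replace_col S (vec N (\<lambda>i. poly G a * root_power_col (degree G) N a i)) (N - 1))"
    using cramer_lemma_mat[OF S _ L, of "vec N (\<lambda>j. a ^ (N - 1 - j))"] L
      sylvester_mult_root_powers[OF Fa, of G]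
    by (simp add: S_def N_def)
  also have "\<dots> = poly G a * det (replace_col S (vec N (root_power_col (degree G) N a)) (N - 1))"
    by (rule det_replace_col_smult[OF S L])
  finally show ?thesis by (simp add: resultant_def S_def)
qed

lemma sylvester_two_roots_mult:
  fixes F G :: "'a::field poly"
  assumes Fa: "poly F a = 0" and Fb: "poly F b = 0" and ab: "a \<noteq> b" and Ga: "poly G a \<noteq> 0"
    and deg: "degree F \<ge> 2"
  defines "N \<equiv> degree F + degree G" and "n \<equiv> degree G"
  defines "S1 \<equiv> replace_col (sylvester_mat F G) (vec N (\<lambda>i. poly G a * root_power_col n N a i)) (N - 1)"
  shows "S1 *\<^sub>v vec N (\<lambda>j. if j = N - 1 then (poly G a - poly G b) / ((b - a) * poly G a)
                          else (b ^ (N - 1 - j) - a ^ (N - 1 - j)) / (b - a))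
    = vec N (\<lambda>i. poly G b * ((root_power_col n N b i - root_power_col n N a i) / (b - a)))"
    (is "S1 *\<^sub>v vec N ?x = vec N ?y")
proof -
  define S where "S = sylvester_mat F G"
  define \<mu> where "\<mu> = (poly G a - poly G b) / ((b - a) * poly G a)"
  define d where "d = (\<lambda>j. (b ^ (N - 1 - j) - a ^ (N - 1 - j)) / (b - a))"
  have S: "S \<in> carrier_mat N N" unfolding S_def N_def by (rule sylvester_carrier_mat)
  have L: "N - 1 < N" using deg by (simp add: N_def)
  have S1: "S1 \<in> carrier_mat N N" using S by (simp add: S1_def S_def N_def replace_col_def)
  show ?thesis
  proof (rule eq_vecI)
    fix i assume "i < dim_vec (vec N ?y)"
    then have i: "i < N" by simp
    have "(S1 *\<^sub>v vec N ?x) $ i = (\<Sum>j\<in>{0..<N}. S1 $$ (i,j) * ?x j)"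
      using i S1 by (simp add: scalar_prod_def)
    also have "\<dots> = (\<Sum>j\<in>{0..<N}. S $$ (i,j) * d j
        + (if j = N - 1 then poly G a * root_power_col n N a i * \<mu> else 0))"
      by (rule sum.cong) (use i S in \<open>auto simp: S1_def S_def replace_col_def d_def \<mu>_def\<close>)
    also have "\<dots> = (\<Sum>j\<in>{0..<N}. S $$ (i,j) * d j) + poly G a * root_power_col n N a i * \<mu>"
      using L by (simp add: sum.distrib)
    also have "(\<Sum>j\<in>{0..<N}. S $$ (i,j) * d j)
        = ((\<Sum>j\<in>{0..<N}. S $$ (i,j) * b ^ (N - 1 - j)) - (\<Sum>j\<in>{0..<N}. S $$ (i,j) * a ^ (N - 1 - j)))
          / (b - a)"
      by (simp add: d_def sum_subtractf[symmetric] sum_divide_distrib[symmetric] right_diff_distrib)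
    also have "\<dots> = (poly G b * root_power_col n N b i - poly G a * root_power_col n N a i) / (b - a)"
      using sylvester_row_times_root_powers[OF Fa i[unfolded N_def]]
        sylvester_row_times_root_powers[OF Fb i[unfolded N_def]]
      by (simp add: S_def N_def n_def)
    also have "\<dots> + poly G a * root_power_col n N a i * \<mu>
        = poly G b * ((root_power_col n N b i - root_power_col n N a i) / (b - a))"
      using ab Ga by (simp add: \<mu>_def divide_simps) (simp add: algebra_simps)
    finally show "(S1 *\<^sub>v vec N ?x) $ i = vec N ?y $ i" using i by simp
  qed (use S1 in simp)
qed

text \<open>A second application of Cramer's rule, with the divided difference of the power
  vectors of two roots \<open>a \<noteq> b\<close>, pulls out \<open>G(b)\<close> as well.\<close>
lemma resultant_two_roots_factor:
  fixes F G :: "'a::field poly"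
  assumes Fa: "poly F a = 0" and Fb: "poly F b = 0" and ab: "a \<noteq> b" and Ga: "poly G a \<noteq> 0"
    and deg: "degree F \<ge> 2"
  defines "N \<equiv> degree F + degree G" and "n \<equiv> degree G"
  shows "resultant F G = poly G a * poly G b *
    det (replace_col (replace_col (sylvester_mat F G)
        (vec N (\<lambda>i. (root_power_col n N b i - root_power_col n N a i) / (b - a))) (N - 2))
      (vec N (root_power_col n N a)) (N - 1))"
proof -
  define S where "S = sylvester_mat F G"
  define y where "y = (\<lambda>i. (root_power_col n N b i - root_power_col n N a i) / (b - a))"
  define S1 where "S1 = replace_col S (vec N (\<lambda>i. poly G a * root_power_col n N a i)) (N - 1)"
  have S: "S \<in> carrier_mat N N" unfolding S_def N_def by (rule sylvester_carrier_mat)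
  have S1: "S1 \<in> carrier_mat N N" using S by (simp add: S1_def replace_col_def)
  have L: "N - 1 < N" "N - 2 < N" "N - 2 \<noteq> N - 1" using deg by (auto simp: N_def)
  have "resultant F G = det S1"
    using resultant_root_factor[OF Fa] deg det_replace_col_smult[OF S L(1)]
    by (simp add: resultant_def S_def S1_def N_def n_def)
  also have "\<dots> = det (replace_col S1 (vec N (\<lambda>i. poly G b * y i)) (N - 2))"
  proof -
    define x where "x = vec N (\<lambda>j. if j = N - 1 then (poly G a - poly G b) / ((b - a) * poly G a)
                          else (b ^ (N - 1 - j) - a ^ (N - 1 - j)) / (b - a))"
    have x: "x \<in> carrier_vec N" by (simp add: x_def)
    have "x $ (N - 2) = 1" using L ab by (simp add: x_def numeral_2_eq_2 Suc_diff_Suc)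
    moreover have "S1 *\<^sub>v x = vec N (\<lambda>i. poly G b * y i)"
      unfolding x_def y_def S1_def S_def N_def n_def
      by (rule sylvester_two_roots_mult[OF Fa Fb ab Ga deg])
    ultimately show ?thesis using cramer_lemma_mat[OF S1 x L(2)] by simp
  qed
  also have "\<dots> = poly G b * det (replace_col S1 (vec N y) (N - 2))"
    by (rule det_replace_col_smult[OF S1 L(2)])
  also have "replace_col S1 (vec N y) (N - 2)
      = replace_col (replace_col S (vec N y) (N - 2)) (vec N (\<lambda>i. poly G a * root_power_col n N a i)) (N - 1)"
    by (rule eq_matI) (use L in \<open>auto simp: S1_def replace_col_def\<close>)
  also have "det \<dots> = poly G a * det (replace_col (replace_col S (vec N y) (N - 2)) (vec N (root_power_col n N a)) (N - 1))"
    by (rule det_replace_col_smult) (use S L in \<open>auto simp: replace_col_def\<close>)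
  finally show ?thesis by (simp add: S_def y_def)
qed

section \<open>Discretely valued fields\<close>

locale discretely_valued =
  fixes v :: "'a::field \<Rightarrow> int" and \<pi> :: 'a
  assumes valuation: "discrete_valuation v"
    and uniformizer_nonzero: "\<pi> \<noteq> 0" and v_uniformizer: "v \<pi> = 1"
begin

abbreviation "A \<equiv> val_ring v"

lemma v_mult: "x \<noteq> 0 \<Longrightarrow> y \<noteq> 0 \<Longrightarrow> v (x * y) = v x + v y"
  using valuation unfolding discrete_valuation_def by blast

lemma v_add_ge_min: "x \<noteq> 0 \<Longrightarrow> y \<noteq> 0 \<Longrightarrow> x + y \<noteq> 0 \<Longrightarrow> v (x + y) \<ge> min (v x) (v y)"
  using valuation unfolding discrete_valuation_def by blast

lemma v_one: "v 1 = 0"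
  using v_mult[of 1 1] by simp

lemma v_minus_one: "v (-1) = 0"
  using v_mult[of "-1" "-1"] v_one by simp

lemma v_uminus: "x \<noteq> 0 \<Longrightarrow> v (- x) = v x"
  using v_mult[of "-1" x] v_minus_one by simp

lemma v_inverse: "x \<noteq> 0 \<Longrightarrow> v (inverse x) = - v x"
  using v_mult[of x "inverse x"] v_one by simp

lemma v_divide: "x \<noteq> 0 \<Longrightarrow> y \<noteq> 0 \<Longrightarrow> v (x / y) = v x - v y"
  using v_mult[of x "inverse y"] v_inverse[of y] by (simp add: divide_inverse)

lemma v_power: "x \<noteq> 0 \<Longrightarrow> v (x ^ k) = int k * v x"
  by (induction k) (auto simp: v_one v_mult algebra_simps)

lemma v_uniformizer_power: "v (\<pi> ^ k) = int k"
  using v_power[OF uniformizer_nonzero] v_uniformizer by simp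

lemma vge_zero [simp]: "vge v 0 m"
  unfolding vge_def by simp

lemma vge_mono: "vge v x m \<Longrightarrow> m' \<le> m \<Longrightarrow> vge v x m'"
  unfolding vge_def by auto

lemma vge_add: "vge v x m \<Longrightarrow> vge v y m \<Longrightarrow> vge v (x + y) m"
  unfolding vge_def using v_add_ge_min[of x y] by (cases "x = 0"; cases "y = 0"; cases "x + y = 0") auto

lemma vge_uminus: "vge v x m \<Longrightarrow> vge v (- x) m"
  unfolding vge_def using v_uminus by (cases "x = 0") auto

lemma vge_diff: "vge v x m \<Longrightarrow> vge v y m \<Longrightarrow> vge v (x - y) m"
  using vge_add[of x m "-y"] vge_uminus[of y m] by simp

lemma vge_mult: "vge v x m \<Longrightarrow> vge v y n \<Longrightarrow> vge v (x * y) (m + n)"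
  unfolding vge_def using v_mult by (cases "x = 0"; cases "y = 0") auto

lemma vge_uniformizer_power_mult: "vge v x m \<Longrightarrow> vge v (\<pi> ^ k * x) (int k + m)"
  using vge_mult[of "\<pi> ^ k" "int k" x m] v_uniformizer_power by (simp add: vge_def)

lemma vge_sum: "(\<And>x. x \<in> S \<Longrightarrow> vge v (g x) m) \<Longrightarrow> vge v (sum g S) m"
  by (induction S rule: infinite_finite_induct) (auto intro: vge_add)

lemma val_ring_zero [simp]: "0 \<in> A" and val_ring_one [simp]: "1 \<in> A"
  unfolding val_ring_def vge_def using v_one by auto

lemma val_ring_add: "x \<in> A \<Longrightarrow> y \<in> A \<Longrightarrow> x + y \<in> A"
  unfolding val_ring_def using vge_add by auto

lemma val_ring_uminus: "x \<in> A \<Longrightarrow> - x \<in> A"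
  unfolding val_ring_def using vge_uminus by auto

lemma val_ring_diff: "x \<in> A \<Longrightarrow> y \<in> A \<Longrightarrow> x - y \<in> A"
  unfolding val_ring_def using vge_diff by auto

lemma val_ring_mult: "x \<in> A \<Longrightarrow> y \<in> A \<Longrightarrow> x * y \<in> A"
  unfolding val_ring_def using vge_mult[of x 0 y 0] by auto

lemma val_ring_power: "x \<in> A \<Longrightarrow> x ^ k \<in> A"
  by (induction k) (auto intro: val_ring_mult)

lemma uniformizer_in_val_ring: "\<pi> \<in> A"
  unfolding val_ring_def vge_def using v_uniformizer by auto

lemma of_nat_in_val_ring: "of_nat n \<in> A"
  by (induction n) (auto intro: val_ring_add)

lemma of_int_in_val_ring: "of_int n \<in> A"
  using of_nat_in_val_ring val_ring_uminus[OF of_nat_in_val_ring] by (cases n) (auto simp del: of_nat_Suc)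

lemma sum_in_val_ring: "(\<And>x. x \<in> S \<Longrightarrow> g x \<in> A) \<Longrightarrow> sum g S \<in> A"
  by (induction S rule: infinite_finite_induct) (auto intro: val_ring_add)

lemma prod_in_val_ring: "(\<And>x. x \<in> S \<Longrightarrow> g x \<in> A) \<Longrightarrow> prod g S \<in> A"
  by (induction S rule: infinite_finite_induct) (auto intro: val_ring_mult)

lemma v_nonneg_if_val_ring: "x \<in> A \<Longrightarrow> x \<noteq> 0 \<Longrightarrow> v x \<ge> 0"
  unfolding val_ring_def vge_def by auto

lemma vge_mult_val_ring: "vge v x m \<Longrightarrow> y \<in> A \<Longrightarrow> vge v (x * y) m"
  using vge_mult[of x m y 0] unfolding val_ring_def by simp

lemma vge_val_ring_mult: "y \<in> A \<Longrightarrow> vge v x m \<Longrightarrow> vge v (y * x) m"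
  using vge_mult_val_ring by (simp add: mult.commute)

lemma val_ring_if_vge: "vge v x m \<Longrightarrow> m \<ge> 0 \<Longrightarrow> x \<in> A"
  unfolding val_ring_def using vge_mono by blast

lemma uniformizer_power_dvd_iff: "(\<exists>t\<in>A. w = \<pi> ^ k * t) \<longleftrightarrow> vge v w (int k)"
proof
  assume "\<exists>t\<in>A. w = \<pi> ^ k * t"
  then obtain t where t: "t \<in> A" "w = \<pi> ^ k * t" by auto
  have "vge v (\<pi> ^ k) (int k)" unfolding vge_def using v_uniformizer_power by simp
  from vge_mult_val_ring[OF this t(1)] t(2) show "vge v w (int k)" by simp
next
  assume w: "vge v w (int k)"
  have pk: "\<pi> ^ k \<noteq> 0" using uniformizer_nonzero by simp
  show "\<exists>t\<in>A. w = \<pi> ^ k * t"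
  proof (cases "w = 0")
    case False
    then have "v (w / \<pi> ^ k) = v w - int k" using v_divide[OF False pk] v_uniformizer_power by simp
    then have "w / \<pi> ^ k \<in> A" using w False unfolding vge_def val_ring_def by auto
    then show ?thesis using pk by (intro bexI[of _ "w / \<pi> ^ k"]) auto
  qed auto
qed

lemma v_eq_if_vge_diff:
  assumes x: "x \<noteq> 0" and m: "v x < m" and d: "vge v (y - x) m"
  shows "y \<noteq> 0" and "v y = v x"
proof -
  show y: "y \<noteq> 0"
  proof
    assume "y = 0"
    then show False using d x m v_uminus[OF x] unfolding vge_def by auto
  qed
  show "v y = v x"
  proof (cases "y = x")
    case False
    then have dx: "y - x \<noteq> 0" by simp
    have "min (v x) (v (y - x)) \<le> v y"
      using v_add_ge_min[of x "y - x"] x y dx by simp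
    moreover have "min (v y) (v (y - x)) \<le> v x"
      using v_add_ge_min[of y "- (y - x)"] v_uminus[OF dx] x y dx by simp
    ultimately show ?thesis using d m dx unfolding vge_def by auto
  qed simp
qed

definition integral_poly :: "'a poly \<Rightarrow> bool" where
  "integral_poly f \<longleftrightarrow> (\<forall>i. coeff f i \<in> A)"

lemma integral_poly_pCons [simp]: "integral_poly (pCons c g) \<longleftrightarrow> c \<in> A \<and> integral_poly g"
  unfolding integral_poly_def by (metis coeff_pCons_0 coeff_pCons_Suc not0_implies_Suc coeff_pCons)

lemma integral_poly_0 [simp]: "integral_poly 0"
  by (simp add: integral_poly_def)

lemma integral_poly_diff: "integral_poly f \<Longrightarrow> integral_poly g \<Longrightarrow> integral_poly (f - g)"
  unfolding integral_poly_def by (auto intro: val_ring_diff)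

lemma integral_poly_pderiv: "integral_poly f \<Longrightarrow> integral_poly (pderiv f)"
  unfolding integral_poly_def coeff_pderiv using val_ring_mult of_nat_in_val_ring by blast

lemma poly_in_val_ring: "integral_poly f \<Longrightarrow> x \<in> A \<Longrightarrow> poly f x \<in> A"
  by (induction f rule: pCons_induct) (auto intro!: val_ring_add val_ring_mult)

lemma poly_shift_expansion:
  assumes "integral_poly f" "x \<in> A" "t \<in> A"
  shows "\<exists>H\<in>A. poly f (x + t) = poly f x + t * poly (pderiv f) x + t\<^sup>2 * H"
  using assms(1)
proof (induction f rule: pCons_induct)
  case (pCons c g)
  then obtain H where H: "H \<in> A" "poly g (x + t) = poly g x + t * poly (pderiv g) x + t\<^sup>2 * H"
    by auto
  have g': "poly (pderiv g) x \<in> A"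
    using pCons.prems assms(2) by (simp add: poly_in_val_ring integral_poly_pderiv)
  have "poly (pCons c g) (x + t) = c + (x + t) * (poly g x + t * poly (pderiv g) x + t\<^sup>2 * H)"
    by (simp add: H(2))
  also have "\<dots> = poly (pCons c g) x + t * poly (pderiv (pCons c g)) x
      + t\<^sup>2 * (x * H + poly (pderiv g) x + t * H)"
    by (simp add: pderiv_pCons power2_eq_square algebra_simps)
  finally show ?case
    using H(1) g' assms(2,3) by (intro bexI[of _ "x * H + poly (pderiv g) x + t * H"] val_ring_add val_ring_mult)
qed (auto intro: bexI[of _ 0])

lemma det_in_val_ring:
  assumes "M \<in> carrier_mat n n" and "\<And>i j. i < n \<Longrightarrow> j < n \<Longrightarrow> M $$ (i,j) \<in> A"
  shows "det M \<in> A"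
  unfolding det_def'[OF assms(1)]
  by (intro sum_in_val_ring val_ring_mult of_int_in_val_ring prod_in_val_ring)
     (use assms(2) in \<open>auto simp: permutes_def\<close>)

lemma prod_vge_diff:
  assumes "\<And>i. i \<in> I \<Longrightarrow> x i \<in> A" "\<And>i. i \<in> I \<Longrightarrow> y i \<in> A"
    and "\<And>i. i \<in> I \<Longrightarrow> vge v (x i - y i) m"
  shows "vge v (prod x I - prod y I) m"
  using assms
proof (induction I rule: infinite_finite_induct)
  case (insert a I)
  have "prod x (insert a I) - prod y (insert a I) = x a * (prod x I - prod y I) + (x a - y a) * prod y I"
    using insert.hyps by (simp add: algebra_simps)
  also have "vge v \<dots> m"
    by (intro vge_add vge_val_ring_mult vge_mult_val_ring insert.IH prod_in_val_ring)
       (use insert.prems in auto)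
  finally show ?case .
qed auto

lemma det_vge_diff:
  assumes M: "M \<in> carrier_mat n n" and M': "M' \<in> carrier_mat n n"
    and "\<And>i j. i < n \<Longrightarrow> j < n \<Longrightarrow> M $$ (i,j) \<in> A"
    and "\<And>i j. i < n \<Longrightarrow> j < n \<Longrightarrow> M' $$ (i,j) \<in> A"
    and "\<And>i j. i < n \<Longrightarrow> j < n \<Longrightarrow> vge v (M $$ (i,j) - M' $$ (i,j)) m"
  shows "vge v (det M - det M') m"
proof -
  have "det M - det M' = (\<Sum>p \<in> {p. p permutes {0..<n}}.
     signof p * ((\<Prod>i = 0..<n. M $$ (i, p i)) - (\<Prod>i = 0..<n. M' $$ (i, p i))))"
    unfolding det_def'[OF M] det_def'[OF M'] by (simp add: sum_subtractf right_diff_distrib)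
  also have "vge v \<dots> m"
    by (intro vge_sum vge_val_ring_mult of_int_in_val_ring prod_vge_diff)
       (use assms(3-) in \<open>auto simp: permutes_def\<close>)
  finally show ?thesis .
qed

lemma sylvester_mat_in_val_ring:
  assumes "integral_poly F" "integral_poly G" "i < degree F + degree G" "j < degree F + degree G"
  shows "sylvester_mat F G $$ (i,j) \<in> A"
  using assms unfolding integral_poly_def by (simp add: sylvester_index_mat)

lemma resultant_in_val_ring:
  "integral_poly F \<Longrightarrow> integral_poly G \<Longrightarrow> resultant F G \<in> A"
  unfolding resultant_def
  by (rule det_in_val_ring[OF sylvester_carrier_mat]) (rule sylvester_mat_in_val_ring)

lemma resultant_vge_diff:
  assumes F: "integral_poly F" and F': "integral_poly F'" and G: "integral_poly G" and G': "integral_poly G'"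
    and dF: "degree F = degree F'" and dG: "degree G = degree G'"
    and "\<And>i. vge v (coeff F i - coeff F' i) m" and "\<And>i. vge v (coeff G i - coeff G' i) m"
  shows "vge v (resultant F G - resultant F' G') m"
  unfolding resultant_def
proof (rule det_vge_diff[OF sylvester_carrier_mat])
  show "sylvester_mat F' G' \<in> carrier_mat (degree F + degree G) (degree F + degree G)"
    unfolding dF dG by (rule sylvester_carrier_mat)
  fix i j assume "i < degree F + degree G" "j < degree F + degree G"
  then show "sylvester_mat F G $$ (i, j) \<in> A" "sylvester_mat F' G' $$ (i, j) \<in> A"
    and "vge v (sylvester_mat F G $$ (i, j) - sylvester_mat F' G' $$ (i, j)) m"
    using sylvester_mat_in_val_ring[OF F G] sylvester_mat_in_val_ring[OF F' G'] assms(7,8)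
    by (simp_all add: dF dG sylvester_index_mat)
qed

lemma root_power_col_in_val_ring: "a \<in> A \<Longrightarrow> root_power_col n N a i \<in> A"
  unfolding root_power_col_def by (simp add: val_ring_power)

lemma divided_power_diff_in_val_ring:
  assumes "a \<in> A" "b \<in> A" "a \<noteq> b"
  shows "(b ^ k - a ^ k) / (b - a) \<in> A"
proof (cases k)
  case (Suc k')
  have "b ^ k - a ^ k = (b - a) * (\<Sum>p<Suc k'. b ^ p * a ^ (k' - p))"
    unfolding Suc by (rule diff_power_eq_sum)
  then have "(b ^ k - a ^ k) / (b - a) = (\<Sum>p<Suc k'. b ^ p * a ^ (k' - p))"
    using assms by simp
  also have "\<dots> \<in> A"
    by (intro sum_in_val_ring val_ring_mult val_ring_power) (use assms in auto)
  finally show ?thesis .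
qed simp

lemma resultant_root_dvd:
  assumes F: "integral_poly F" and G: "integral_poly G" and a: "a \<in> A" and Fa: "poly F a = 0"
    and deg: "degree F + degree G \<ge> 1"
  shows "\<exists>t\<in>A. resultant F G = poly G a * t"
  using resultant_root_factor[OF Fa deg]
  by (auto intro!: det_in_val_ring[of _ "degree F + degree G"] sylvester_mat_in_val_ring[OF F G]
      root_power_col_in_val_ring[OF a] simp: replace_col_def)

lemma resultant_two_roots_dvd:
  assumes F: "integral_poly F" and G: "integral_poly G" and a: "a \<in> A" and b: "b \<in> A"
    and Fa: "poly F a = 0" and Fb: "poly F b = 0" and ab: "a \<noteq> b" and Ga: "poly G a \<noteq> 0"
    and deg: "degree F \<ge> 2"
  shows "\<exists>t\<in>A. resultant F G = poly G a * poly G b * t"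
proof -
  have "(root_power_col n N b i - root_power_col n N a i) / (b - a) \<in> A" for n N i
    using divided_power_diff_in_val_ring[OF a b ab] by (simp add: root_power_col_def)
  then show ?thesis
    using resultant_two_roots_factor[OF Fa Fb ab Ga deg]
    by (auto intro!: det_in_val_ring[of _ "degree F + degree G"] sylvester_mat_in_val_ring[OF F G]
        root_power_col_in_val_ring[OF a] simp: replace_col_def)
qed

lemma cong_rel_iff: "(x, y) \<in> cong_rel v \<pi> n \<longleftrightarrow> x \<in> A \<and> y \<in> A \<and> vge v (x - y) (int n)"
  unfolding cong_rel_def using uniformizer_power_dvd_iff by auto

lemma equiv_cong_rel: "equiv A (cong_rel v \<pi> n)"
proof (rule equivI)
  show "refl_on A (cong_rel v \<pi> n)"
    by (rule refl_onI) (auto simp: cong_rel_iff)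
  show "sym (cong_rel v \<pi> n)"
    by (rule symI) (auto simp: cong_rel_iff dest: vge_uminus)
  show "trans (cong_rel v \<pi> n)"
    by (rule transI) (auto simp: cong_rel_iff dest: vge_add)
qed (auto simp: cong_rel_def)

definition class_rep :: "'a set \<Rightarrow> 'a" where
  "class_rep C = (SOME y. y \<in> C)"

lemma class_rep_cong:
  assumes "x \<in> A" shows "(x, class_rep (cong_rel v \<pi> n `` {x})) \<in> cong_rel v \<pi> n"
proof -
  have "x \<in> cong_rel v \<pi> n `` {x}" using assms by (simp add: cong_rel_iff)
  then have "class_rep (cong_rel v \<pi> n `` {x}) \<in> cong_rel v \<pi> n `` {x}"
    unfolding class_rep_def by (rule someI)
  then show ?thesis by simp
qed

lemma class_rep_in_val_ring: "C \<in> quot_ring v \<pi> n \<Longrightarrow> class_rep C \<in> A"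
  unfolding quot_ring_def using class_rep_cong by (auto elim!: quotientE simp: cong_rel_iff)

definition digit_sum :: "(nat \<Rightarrow> 'a set) \<Rightarrow> nat \<Rightarrow> 'a" where
  "digit_sum c k = (\<Sum>i<k. class_rep (c i) * \<pi> ^ i)"

lemma digit_sum_in_val_ring:
  "c \<in> PiE {..<k} (\<lambda>_. quot_ring v \<pi> 1) \<Longrightarrow> digit_sum c k \<in> A"
  unfolding digit_sum_def
  by (intro sum_in_val_ring val_ring_mult val_ring_power uniformizer_in_val_ring class_rep_in_val_ring)
     (auto simp: PiE_iff)

lemma digit_expansion:
  assumes "x \<in> A"
  shows "\<exists>c\<in>PiE {..<k} (\<lambda>_. quot_ring v \<pi> 1). vge v (x - digit_sum c k) (int k)"
proof (induction k)
  case 0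
  show ?case using assms by (auto simp: digit_sum_def val_ring_def)
next
  case (Suc k)
  then obtain c where c: "c \<in> PiE {..<k} (\<lambda>_. quot_ring v \<pi> 1)" "vge v (x - digit_sum c k) (int k)"
    by blast
  obtain y where y: "y \<in> A" "x - digit_sum c k = \<pi> ^ k * y"
    using c(2) uniformizer_power_dvd_iff by blast
  define C where "C = cong_rel v \<pi> 1 `` {y}"
  have C: "C \<in> quot_ring v \<pi> 1" unfolding C_def quot_ring_def using y(1) by (rule quotientI)
  have "(y, class_rep C) \<in> cong_rel v \<pi> 1" unfolding C_def by (rule class_rep_cong[OF y(1)])
  then have "vge v (y - class_rep C) 1" by (simp add: cong_rel_iff)
  then have "vge v (\<pi> ^ k * (y - class_rep C)) (int k + 1)"
    by (rule vge_uniformizer_power_mult)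
  moreover have "x - digit_sum (c(k := C)) (Suc k) = \<pi> ^ k * (y - class_rep C)"
    using y(2) by (simp add: digit_sum_def lessThan_Suc algebra_simps)
  ultimately have "vge v (x - digit_sum (c(k := C)) (Suc k)) (int (Suc k))"
    by (simp add: add.commute)
  moreover have "c(k := C) \<in> PiE {..<Suc k} (\<lambda>_. quot_ring v \<pi> 1)"
    using c(1) C by (auto simp: PiE_iff extensional_def)
  ultimately show ?case by blast
qed


lemma digit_shift:
  assumes a: "a \<in> A" and b: "b \<in> A" and ab: "vge v (a - b) (int k)"
  obtains d where "d \<in> PiE {..<n} (\<lambda>_. quot_ring v \<pi> 1)"
    and "(a, b + \<pi> ^ k * digit_sum d n) \<in> cong_rel v \<pi> (k + n)"
proof -
  obtain w where w: "w \<in> A" "a - b = \<pi> ^ k * w"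
    using ab uniformizer_power_dvd_iff by blast
  obtain d where d: "d \<in> PiE {..<n} (\<lambda>_. quot_ring v \<pi> 1)" "vge v (w - digit_sum d n) (int n)"
    using digit_expansion[OF w(1)] by blast
  have "a - (b + \<pi> ^ k * digit_sum d n) = \<pi> ^ k * (w - digit_sum d n)"
    using w(2) by (simp add: algebra_simps)
  moreover have "vge v (\<pi> ^ k * (w - digit_sum d n)) (int k + int n)"
    by (rule vge_uniformizer_power_mult[OF d(2)])
  moreover have "b + \<pi> ^ k * digit_sum d n \<in> A"
    using b digit_sum_in_val_ring[OF d(1)]
    by (intro val_ring_add val_ring_mult val_ring_power uniformizer_in_val_ring)
  ultimately show thesis using that d(1) a by (simp add: cong_rel_iff)
qed
end

section \<open>Approximate roots of a separable polynomial\<close>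

locale approximate_roots = discretely_valued +
  fixes f :: "'a poly" and N :: nat
  assumes integral_f: "integral_poly f" and monic: "lead_coeff f = 1"
    and discriminant_nonzero: "resultant f (pderiv f) \<noteq> 0"
    and N_large: "int N > 2 * v (resultant f (pderiv f))"
begin

abbreviation "R \<equiv> v (resultant f (pderiv f))"

abbreviation "vd x \<equiv> v (poly (pderiv f) x)"

definition approx_root :: "'a \<Rightarrow> bool" where
  "approx_root a \<longleftrightarrow> a \<in> A \<and> vge v (poly f a) (int N)"

lemma integral_pderiv_f: "integral_poly (pderiv f)"
  using integral_poly_pderiv[OF integral_f] .

lemma v_discriminant_nonneg: "R \<ge> 0"
  using resultant_in_val_ring[OF integral_f integral_pderiv_f] discriminant_nonzero
  by (rule v_nonneg_if_val_ring)

lemma v_discriminant_less: "R < int N"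
  using N_large v_discriminant_nonneg by simp

lemma degree_pos_if_approx_root:
  assumes "approx_root a" shows "degree f \<ge> 1"
proof (rule ccontr)
  assume "\<not> degree f \<ge> 1"
  then have "degree f = 0" by simp
  then have "f = 1" using degree_0_id[of f] monic by (simp add: one_pCons)
  then show False using assms v_one v_discriminant_less v_discriminant_nonneg
    unfolding approx_root_def vge_def by simp
qed

lemma v_resultant_perturbed:
  assumes F: "integral_poly F" and G: "integral_poly G"
    and dF: "degree F = degree f" and dG: "degree G = degree (pderiv f)"
    and "\<And>i. vge v (coeff F i - coeff f i) m" and "\<And>i. vge v (coeff G i - coeff (pderiv f) i) m"
    and m: "m > R"
  shows "resultant F G \<noteq> 0" and "v (resultant F G) = R"
proof -
  have "vge v (resultant F G - resultant f (pderiv f)) m"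
    by (rule resultant_vge_diff[OF F integral_f G integral_pderiv_f dF dG assms(5,6)])
  then show "resultant F G \<noteq> 0" "v (resultant F G) = R"
    by (rule v_eq_if_vge_diff[OF discriminant_nonzero m])+
qed

lemma approx_root_deriv_bound:
  assumes a: "approx_root a"
  shows "poly (pderiv f) a \<noteq> 0" and "vd a \<le> R"
proof -
  have aA: "a \<in> A" and fa: "vge v (poly f a) (int N)" using a by (auto simp: approx_root_def)
  define F where "F = f - [:poly f a:]"
  have F: "integral_poly F"
    unfolding F_def using integral_f poly_in_val_ring[OF integral_f aA] by (simp add: integral_poly_diff)
  have "degree F = degree f" by (simp add: F_def degree_diff_const)
  moreover have "vge v (coeff F i - coeff f i) (int N)" for i
    using fa by (cases i) (auto simp: F_def intro: vge_uminus)
  ultimately have res: "resultant F (pderiv f) \<noteq> 0" "v (resultant F (pderiv f)) = R"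
    using v_resultant_perturbed[OF F integral_pderiv_f _ refl _ _ v_discriminant_less] by simp_all
  have "poly F a = 0" "degree F + degree (pderiv f) \<ge> 1"
    using degree_pos_if_approx_root[OF a] by (simp_all add: F_def degree_diff_const)
  then obtain t where t: "t \<in> A" "resultant F (pderiv f) = poly (pderiv f) a * t"
    using resultant_root_dvd[OF F integral_pderiv_f aA] by blast
  with res(1) have nz: "poly (pderiv f) a \<noteq> 0" "t \<noteq> 0" by auto
  have "R = vd a + v t" using res(2) t(2) v_mult[OF nz] by simp
  moreover have "v t \<ge> 0" using v_nonneg_if_val_ring t(1) nz(2) .
  ultimately show "poly (pderiv f) a \<noteq> 0" "vd a \<le> R" using nz(1) by simp_all
qed

lemma secant_slope_vge:
  assumes a: "approx_root a" and c: "approx_root c" and ac: "a \<noteq> c"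
  shows "vge v ((poly f a - poly f c) / (a - c)) (int N - v (a - c))"
proof (cases "poly f a - poly f c = 0")
  case False
  have "vge v (poly f a - poly f c) (int N)"
    using a c by (intro vge_diff) (auto simp: approx_root_def)
  moreover have "v ((poly f a - poly f c) / (a - c)) = v (poly f a - poly f c) - v (a - c)"
    using v_divide[OF False] ac by simp
  ultimately show ?thesis using False ac unfolding vge_def by auto
qed simp

text \<open>The hypothesis on \<open>v (a - c)\<close> makes the slope of the secant line, and hence the whole
  perturbation, divisible by \<open>\<pi>\<^bsup>R+1\<^esup>\<close>.\<close>
lemma secant_perturbation:
  assumes a: "approx_root a" and c: "approx_root c" and ac: "a \<noteq> c"
    and near: "v (a - c) \<le> vd a" and deg: "degree f \<ge> 2"
  obtains F where "integral_poly F" "poly F a = 0" "poly F c = 0" "degree F = degree f"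
    and "resultant F (pderiv F) \<noteq> 0" "v (resultant F (pderiv F)) = R"
    and "\<And>x. approx_root x \<Longrightarrow> poly (pderiv F) x \<noteq> 0 \<and> v (poly (pderiv F) x) = vd x"
proof -
  have aA: "a \<in> A" and cA: "c \<in> A" using a c by (auto simp: approx_root_def)
  define m where "m = int N - v (a - c)"
  have "v (a - c) \<ge> 0" using v_nonneg_if_val_ring[OF val_ring_diff[OF aA cA]] ac by simp
  moreover have m: "m > R" using near approx_root_deriv_bound(2)[OF a] N_large by (simp add: m_def)
  ultimately have mN: "m \<le> int N" "m \<ge> 0" using v_discriminant_nonneg by (auto simp: m_def)
  define s where "s = (poly f a - poly f c) / (a - c)"
  define c0 where "c0 = poly f a - a * s"
  have s: "vge v s m" unfolding s_def m_def by (rule secant_slope_vge[OF a c ac])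
  have c0: "vge v c0 m"
    unfolding c0_def using a mN(1) by (intro vge_diff vge_val_ring_mult[OF aA s])
      (auto simp: approx_root_def intro: vge_mono)
  define F where "F = f - [:c0, s:]"
  have slope: "s * (a - c) = poly f a - poly f c" using ac by (simp add: s_def)
  have "poly F c = poly f c - poly f a + s * (a - c)" by (simp add: F_def c0_def algebra_simps)
  then have F: "integral_poly F" "poly F a = 0" "poly F c = 0"
    using integral_f val_ring_if_vge[OF s mN(2)] val_ring_if_vge[OF c0 mN(2)] slope
    by (simp_all add: F_def c0_def integral_poly_diff)
  have F': "pderiv F = pderiv f - [:s:]" by (simp add: F_def pderiv_diff pderiv_pCons)
  have "vge v (coeff [:c0, s:] i) m" for i
    using s c0 by (cases i) (auto simp: coeff_pCons split: nat.split)
  then have coeffs: "vge v (coeff F i - coeff f i) m" for i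
    using vge_uminus by (simp add: F_def)
  have coeffs': "vge v (coeff (pderiv F) i - coeff (pderiv f) i) m" for i
    using vge_uminus[OF s] by (cases i) (simp_all add: F')
  have deg_F: "degree F = degree f" "degree (pderiv F) = degree (pderiv f)"
    unfolding F' by (simp_all add: F_def degree_diff_linear[OF deg] degree_diff_const)
  have "poly (pderiv F) x \<noteq> 0 \<and> v (poly (pderiv F) x) = vd x" if x: "approx_root x" for x
  proof -
    have "vd x < m" using approx_root_deriv_bound(2)[OF x] m by simp
    moreover have "vge v (poly (pderiv F) x - poly (pderiv f) x) m"
      using vge_uminus[OF s] by (simp add: F')
    ultimately show ?thesis using v_eq_if_vge_diff[OF approx_root_deriv_bound(1)[OF x]] by blast
  qed
  with F deg_F show thesis
    using that v_resultant_perturbed[OF F(1) integral_poly_pderiv[OF F(1)] deg_F coeffs coeffs' m]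
    by blast
qed

lemma approx_roots_deriv_sum_bound:
  assumes a: "approx_root a" and c: "approx_root c" and ac: "a \<noteq> c"
    and near: "v (a - c) \<le> vd a" and deg: "degree f \<ge> 2"
  shows "vd a + vd c \<le> R"
proof -
  obtain F where F: "integral_poly F" "poly F a = 0" "poly F c = 0" "degree F = degree f"
    and res: "resultant F (pderiv F) \<noteq> 0" "v (resultant F (pderiv F)) = R"
    and F': "\<And>x. approx_root x \<Longrightarrow> poly (pderiv F) x \<noteq> 0 \<and> v (poly (pderiv F) x) = vd x"
    using secant_perturbation[OF a c ac near deg] by blast
  have "a \<in> A" "c \<in> A" using a c by (auto simp: approx_root_def)
  then obtain t where t: "t \<in> A" "resultant F (pderiv F) = poly (pderiv F) a * poly (pderiv F) c * t"
    using resultant_two_roots_dvd[OF F(1) integral_poly_pderiv[OF F(1)] _ _ F(2,3) ac] F'[OF a] F(4) deg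
    by auto
  then have "t \<noteq> 0" using res(1) by auto
  then have "R = vd a + vd c + v t"
    using res(2) t(2) F'[OF a] F'[OF c] by (simp add: v_mult)
  moreover have "v t \<ge> 0" using v_nonneg_if_val_ring t(1) \<open>t \<noteq> 0\<close> .
  ultimately show ?thesis by simp
qed

text \<open>Taylor expansion at \<open>c\<close>: when \<open>vd c < v (a - c) < N - vd c\<close>, the linear term
  \<open>(a - c) f'(c)\<close> has strictly smaller valuation than all the other terms.\<close>
lemma approx_roots_dist_dichotomy:
  assumes a: "approx_root a" and c: "approx_root c" and ac: "a \<noteq> c"
  shows "v (a - c) \<le> vd c \<or> v (a - c) \<ge> int N - vd c"
proof (rule ccontr)
  assume between: "\<not> ?thesis"
  define t where "t = a - c"
  define k where "k = v t"
  have aA: "a \<in> A" and cA: "c \<in> A" using a c by (auto simp: approx_root_def)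
  have t0: "t \<noteq> 0" and tA: "t \<in> A" using ac val_ring_diff[OF aA cA] by (simp_all add: t_def)
  have f'c: "poly (pderiv f) c \<noteq> 0" by (rule approx_root_deriv_bound(1)[OF c])
  obtain H where H: "H \<in> A" and taylor: "poly f (c + t) = poly f c + t * poly (pderiv f) c + t\<^sup>2 * H"
    using poly_shift_expansion[OF integral_f cA tA] by blast
  have "t * poly (pderiv f) c = (poly f a - poly f c) - t\<^sup>2 * H"
    using taylor by (simp add: t_def)
  also have "vge v \<dots> (k + vd c + 1)"
  proof (rule vge_diff)
    show "vge v (poly f a - poly f c) (k + vd c + 1)"
      using a c between by (intro vge_mono[OF vge_diff]) (auto simp: approx_root_def k_def t_def)
    have "vge v (t\<^sup>2) (2 * k)" using v_power[OF t0, of 2] t0 unfolding vge_def k_def by simp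
    then show "vge v (t\<^sup>2 * H) (k + vd c + 1)"
      using between by (intro vge_mono[OF vge_mult_val_ring[OF _ H]]) (auto simp: k_def t_def)
  qed
  finally show False using v_mult[OF t0 f'c] t0 f'c unfolding vge_def k_def by simp
qed

lemma vd_eq_0_if_degree_1:
  assumes "degree f = 1" shows "vd x = 0"
proof -
  have "pderiv f = 1"
  proof (rule poly_eqI)
    fix i show "coeff (pderiv f) i = coeff 1 i"
      using monic assms by (cases i) (simp_all add: coeff_pderiv coeff_eq_0)
  qed
  then show ?thesis using v_one by simp
qed

text \<open>Two approximate roots congruent modulo \<open>\<pi>\<^bsup>\<lfloor>R/2\<rfloor>+1\<^esup>\<close> are congruent modulo \<open>\<pi>\<^bsup>N-R\<^esup>\<close>:
  otherwise the dichotomy puts \<open>v (a - c)\<close> below both \<open>vd a\<close> and \<open>vd c\<close>, whose sum is at most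
  \<open>R\<close>.\<close>
lemma approx_roots_close:
  assumes a: "approx_root a" and c: "approx_root c"
    and near: "vge v (a - c) (int (nat R div 2) + 1)"
  shows "vge v (a - c) (int N - R)"
proof (cases "a = c")
  case ac: False
  define k where "k = v (a - c)"
  have k_ge: "k \<ge> int (nat R div 2) + 1" using near ac unfolding vge_def k_def by auto
  have "v (c - a) = k" using v_uminus[of "a - c"] ac by (simp add: k_def)
  then consider "k \<ge> int N - vd c" | "k \<le> vd c" "k \<le> vd a"
    using approx_roots_dist_dichotomy[OF a c ac] approx_roots_dist_dichotomy[OF c a] ac
      approx_root_deriv_bound(2)[OF a] approx_root_deriv_bound(2)[OF c] N_large
    unfolding k_def by fastforce
  then show ?thesis
  proof cases
    case 1
    then show ?thesis using approx_root_deriv_bound(2)[OF c] unfolding vge_def k_def by auto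
  next
    case 2
    have "nat R < 2 * (nat R div 2) + 2" by linarith
    then have "int (nat R) < int (2 * (nat R div 2) + 2)" by linarith
    then have "2 * (int (nat R div 2) + 1) > R" using v_discriminant_nonneg by simp
    moreover have "vd a + vd c \<le> R \<or> vd a = 0"
      using approx_roots_deriv_sum_bound[OF a c ac] vd_eq_0_if_degree_1
        degree_pos_if_approx_root[OF a] 2 by (fastforce simp: k_def)
    ultimately show ?thesis using 2 k_ge by linarith
  qed
qed simp

lemma roots_mod_approx_root:
  assumes "Cl \<in> roots_mod v \<pi> N f"
  obtains a where "approx_root a" and "Cl = cong_rel v \<pi> N `` {a}"
proof -
  from assms obtain a b where Cl: "Cl \<in> quot_ring v \<pi> N" and "a \<in> Cl" "b \<in> A"
    and "poly f a = \<pi> ^ N * b" unfolding roots_mod_def by auto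
  moreover from Cl obtain a0 where "a0 \<in> A" "Cl = cong_rel v \<pi> N `` {a0}"
    unfolding quot_ring_def by (auto elim!: quotientE)
  ultimately have "approx_root a" "Cl = cong_rel v \<pi> N `` {a}"
    using uniformizer_power_dvd_iff equiv_class_eq[OF equiv_cong_rel]
    by (auto simp: approx_root_def cong_rel_iff)
  then show thesis by (rule that)
qed

text \<open>A fixed approximate root in the residue class modulo \<open>\<pi>\<^bsup>h+1\<^esup>\<close> with digits \<open>c\<close>, if
  there is one.\<close>
definition root_center :: "nat \<Rightarrow> (nat \<Rightarrow> 'a set) \<Rightarrow> 'a" where
  "root_center h c = (SOME a. approx_root a \<and> vge v (a - digit_sum c (Suc h)) (int (Suc h)))"

lemma roots_mod_digits:
  assumes "Cl \<in> roots_mod v \<pi> N f"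
  obtains c d where "c \<in> PiE {..<Suc (nat R div 2)} (\<lambda>_. quot_ring v \<pi> 1)"
    and "d \<in> PiE {..<nat R} (\<lambda>_. quot_ring v \<pi> 1)"
    and "Cl = cong_rel v \<pi> N `` {root_center (nat R div 2) c + \<pi> ^ (N - nat R) * digit_sum d (nat R)}"
proof -
  define h where "h = nat R div 2"
  define r where "r = nat R"
  obtain a where a: "approx_root a" and Cl: "Cl = cong_rel v \<pi> N `` {a}"
    using roots_mod_approx_root[OF assms] .
  have aA: "a \<in> A" using a by (simp add: approx_root_def)
  obtain c where c: "c \<in> PiE {..<Suc h} (\<lambda>_. quot_ring v \<pi> 1)"
    and ac: "vge v (a - digit_sum c (Suc h)) (int (Suc h))"
    using digit_expansion[OF aA] by blast
  define a0 where "a0 = root_center h c"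
  have "approx_root a0 \<and> vge v (a0 - digit_sum c (Suc h)) (int (Suc h))"
    unfolding a0_def root_center_def by (rule someI[of _ a]) (use a ac in auto)
  then have a0: "approx_root a0" and "vge v (a - a0) (int h + 1)"
    using vge_diff[OF ac, of "a0 - digit_sum c (Suc h)"] by (auto simp: add.commute)
  moreover have "int (N - r) = int N - R"
    using v_discriminant_nonneg v_discriminant_less by (simp add: r_def)
  ultimately have near: "vge v (a - a0) (int (N - r))"
    using approx_roots_close[OF a] by (simp add: h_def)
  have "a0 \<in> A" using a0 by (simp add: approx_root_def)
  then obtain d where d: "d \<in> PiE {..<r} (\<lambda>_. quot_ring v \<pi> 1)"
    and "(a, a0 + \<pi> ^ (N - r) * digit_sum d r) \<in> cong_rel v \<pi> (N - r + r)"
    using digit_shift[OF aA _ near] by blast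
  moreover have "N - r + r = N" using v_discriminant_less by (simp add: r_def)
  ultimately have "(a, a0 + \<pi> ^ (N - r) * digit_sum d r) \<in> cong_rel v \<pi> N" by simp
  then have "Cl = cong_rel v \<pi> N `` {a0 + \<pi> ^ (N - r) * digit_sum d r}"
    using Cl equiv_class_eq[OF equiv_cong_rel] by simp
  then show thesis using that c d by (simp add: a0_def h_def r_def)
qed

lemma card_roots_mod_le:
  assumes fin: "finite (quot_ring v \<pi> 1)"
  shows "card (roots_mod v \<pi> N f) \<le> card (quot_ring v \<pi> 1) ^ (nat R + nat R div 2 + 1)"
proof -
  define Q where "Q = quot_ring v \<pi> 1"
  define D where "D = PiE {..<Suc (nat R div 2)} (\<lambda>_. Q) \<times> PiE {..<nat R} (\<lambda>_. Q)"
  define \<Phi> where "\<Phi> = (\<lambda>(c, d). cong_rel v \<pi> N ``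
    {root_center (nat R div 2) c + \<pi> ^ (N - nat R) * digit_sum d (nat R)})"
  have "roots_mod v \<pi> N f \<subseteq> \<Phi> ` D"
  proof
    fix Cl assume "Cl \<in> roots_mod v \<pi> N f"
    then show "Cl \<in> \<Phi> ` D"
      by (rule roots_mod_digits) (auto simp: \<Phi>_def D_def Q_def)
  qed
  moreover have finD: "finite D" using fin by (simp add: D_def Q_def finite_PiE)
  ultimately have "card (roots_mod v \<pi> N f) \<le> card D"
    by (meson card_image_le card_mono finite_imageI order_trans)
  also have "card D = card Q ^ (nat R + nat R div 2 + 1)"
    by (simp add: D_def card_cartesian_product card_PiE power_add[symmetric] ac_simps)
  finally show ?thesis by (simp add: Q_def)
qed

end

theorem corollary3p12:
  fixes v :: "'a::field \<Rightarrow> int" and \<pi> :: 'a and q :: nat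
    and f :: "'a poly" and N :: nat
  assumes dv: "discrete_valuation v"
    and complete: "v_complete v"
    and unif: "\<pi> \<noteq> 0" "v \<pi> = 1"
    and resfin: "finite (quot_ring v \<pi> 1)"
    and q_def: "card (quot_ring v \<pi> 1) = q"
    and coeffs: "\<forall>i. coeff f i \<in> val_ring v"
    and monic: "lead_coeff f = 1"
    and disc: "resultant f (pderiv f) \<noteq> 0"
    and N: "int N > 2 * v (resultant f (pderiv f))"
  shows "card (roots_mod v \<pi> N f)
           \<le> q ^ (nat (v (resultant f (pderiv f)))
                  + nat (v (resultant f (pderiv f))) div 2 + 1)"
proof -
  interpret discretely_valued v \<pi>
    using dv unif by unfold_locales
  interpret approximate_roots v \<pi> f N
    using coeffs monic disc N by unfold_locales (simp_all add: integral_poly_def)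
  show ?thesis using card_roots_mod_le[OF resfin] q_def by simp
qed

end
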